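(* Let $0<\varepsilon\le1$, $\alpha\in(0,1)$, $\xi(x)=e^{-\alpha x^2/(2\sqrt\varepsilon)}$ and let $\rho$ be a polynomial. Then $$S_\varepsilon\,\rho(x^2)\xi=-\frac{i}{2\sqrt\varepsilon}\Big(\rho(\mathcal T)\log\frac{1+\alpha}{1-\alpha}\Big)\xi,\qquad S^*_\varepsilon\,\rho(x^2)x\xi=-\frac{i}{2\sqrt\varepsilon}\Big(\rho(\mathcal T)\log\frac{1+\alpha}{1-\alpha}\Big)x\xi,$$ where $\mathcal T=x^2-2\sqrt\varepsilon\,\frac{\partial}{\partial\alpha}$.
   Context: Work in $L^2(\mathbb{R})$. Let $q$ be multiplication by $x$, $p=-i\,d/dx$, $t=q^{-1}p$ with $D(t)=\{f\in D(p):pf\in D(q^{-1})\}$, $t^*$ its adjoint; $L^2_0$, $L^2_1$ the even/odd subspaces. Define $S_\varepsilon$ in $L^2_0$ by $D(S_\varepsilon)=\{f\in L^2_0\cap\bigcap_nD(t^{2n+1}):\sum_{n=0}^N\frac{(-1)^n}{2n+1}(\sqrt\varepsilon t)^{2n+1}f$ converges in norm$\}$, $S_\varepsilon f=-\varepsilon^{-1/2}\sum_{n\ge0}\frac{(-1)^n}{2n+1}(\sqrt\varepsilon t)^{2n+1}f$, and $S^*_\varepsilon$ (notation only) in $L^2_1$ by the same formulas with $t^*$ and $L^2_1$. The operator $\mathcal T=x^2-2\sqrt\varepsilon\,\partial_\alpha$ acts on functions of $\alpha$ with $x$ as a parameter; $\rho(\mathcal T)$ is obtained by substituting $\mathcal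 T$ into the polynomial $\rho$, so that $\rho(\mathcal T)\log\frac{1+\alpha}{1-\alpha}$ is a function of $(x,\alpha)$. (The identities include that $\rho(x^2)\xi\in D(S_\varepsilon)$ and $\rho(x^2)x\xi\in D(S^*_\varepsilon)$.) *)

theory Defs
  imports "HOL-Analysis.Analysis" "HOL-Computational_Algebra.Polynomial"
begin

text \<open>Elements of L2(R) are represented by functions real => complex; equality is a.e. equality.\<close>

definition L2 :: "(real \<Rightarrow> complex) \<Rightarrow> bool" where
  "L2 f \<longleftrightarrow> f \<in> borel_measurable lborel \<and> integrable lborel (\<lambda>x. (cmod (f x))^2)"

definition l2norm :: "(real \<Rightarrow> complex) \<Rightarrow> real" where
  "l2norm f = sqrt (integral\<^sup>L lborel (\<lambda>x. (cmod (f x))^2))"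

definition l2inner :: "(real \<Rightarrow> complex) \<Rightarrow> (real \<Rightarrow> complex) \<Rightarrow> complex" where
  "l2inner u v = integral\<^sup>L lborel (\<lambda>x. cnj (u x) * v x)"

definition ae_eq :: "(real \<Rightarrow> complex) \<Rightarrow> (real \<Rightarrow> complex) \<Rightarrow> bool" where
  "ae_eq f g \<longleftrightarrow> (AE x in lborel. f x = g x)"

definition even_fun :: "(real \<Rightarrow> complex) \<Rightarrow> bool" where
  "even_fun f \<longleftrightarrow> L2 f \<and> (AE x in lborel. f (-x) = f x)"

definition odd_fun :: "(real \<Rightarrow> complex) \<Rightarrow> bool" where
  "odd_fun f \<longleftrightarrow> L2 f \<and> (AE x in lborel. f (-x) = - f x)"

text \<open>Graph of p = -i d/dx on its maximal domain H1(R): f is a.e. equal to a locally absolutely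
  continuous F with F' = i h in L2, and p f = h.\<close>
definition p_graph :: "(real \<Rightarrow> complex) \<Rightarrow> (real \<Rightarrow> complex) \<Rightarrow> bool" where
  "p_graph f h \<longleftrightarrow> L2 f \<and> L2 h \<and>
     (\<exists>F. ae_eq F f \<and> (\<forall>a b. F b - F a = (LBINT x=a..b. \<i> * h x)))"

text \<open>Graph of t = q^{-1} p, with D(t) = {f in D(p). p f in D(q^{-1})}.\<close>
definition t_graph :: "(real \<Rightarrow> complex) \<Rightarrow> (real \<Rightarrow> complex) \<Rightarrow> bool" where
  "t_graph f k \<longleftrightarrow> L2 k \<and>
     (\<exists>h. p_graph f h \<and> L2 (\<lambda>x. h x / of_real x) \<and> ae_eq k (\<lambda>x. h x / of_real x))"

definition t_adj_graph :: "(real \<Rightarrow> complex) \<Rightarrow> (real \<Rightarrow> complex) \<Rightarrow> bool" where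
  "t_adj_graph g k \<longleftrightarrow> L2 g \<and> L2 k \<and> (\<forall>f h. t_graph f h \<longrightarrow> l2inner h g = l2inner f k)"

fun pow_graph :: "((real \<Rightarrow> complex) \<Rightarrow> (real \<Rightarrow> complex) \<Rightarrow> bool) \<Rightarrow> nat
    \<Rightarrow> (real \<Rightarrow> complex) \<Rightarrow> (real \<Rightarrow> complex) \<Rightarrow> bool" where
  "pow_graph R 0 f g = (L2 f \<and> L2 g \<and> ae_eq g f)"
| "pow_graph R (Suc n) f g = (\<exists>h. R f h \<and> pow_graph R n h g)"

definition arctan_graph :: "((real \<Rightarrow> complex) \<Rightarrow> (real \<Rightarrow> complex) \<Rightarrow> bool) \<Rightarrow> real
    \<Rightarrow> (real \<Rightarrow> complex) \<Rightarrow> (real \<Rightarrow> complex) \<Rightarrow> bool" where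
  "arctan_graph R \<epsilon> f g \<longleftrightarrow> L2 f \<and> L2 g \<and>
     (\<exists>T. (\<forall>n. pow_graph R (2*n+1) f (T n)) \<and>
        (\<lambda>N. l2norm (\<lambda>x. (\<Sum>n\<le>N. of_real ((-1)^n / real (2*n+1) * sqrt \<epsilon> ^ (2*n+1)) * T n x)
                         + of_real (sqrt \<epsilon>) * g x)) \<longlonglongrightarrow> 0)"

definition S_graph :: "real \<Rightarrow> (real \<Rightarrow> complex) \<Rightarrow> (real \<Rightarrow> complex) \<Rightarrow> bool" where
  "S_graph \<epsilon> f g \<longleftrightarrow> even_fun f \<and> arctan_graph t_graph \<epsilon> f g"

definition S_adj_graph :: "real \<Rightarrow> (real \<Rightarrow> complex) \<Rightarrow> (real \<Rightarrow> complex) \<Rightarrow> bool" where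
  "S_adj_graph \<epsilon> f g \<longleftrightarrow> odd_fun f \<and> arctan_graph t_adj_graph \<epsilon> f g"

definition Tcal :: "real \<Rightarrow> (real \<Rightarrow> real \<Rightarrow> complex) \<Rightarrow> (real \<Rightarrow> real \<Rightarrow> complex)" where
  "Tcal \<epsilon> u = (\<lambda>x a. of_real (x^2) * u x a
                  - of_real (2 * sqrt \<epsilon>) * vector_derivative (\<lambda>b. u x b) (at a))"

definition logfun :: "real \<Rightarrow> real \<Rightarrow> complex" where
  "logfun x a = of_real (ln ((1 + a) / (1 - a)))"

definition rho_T :: "real \<Rightarrow> complex poly \<Rightarrow> real \<Rightarrow> real \<Rightarrow> complex" where
  "rho_T \<epsilon> \<rho> x a = (\<Sum>k\<le>degree \<rho>. coeff \<rho> k * ((Tcal \<epsilon> ^^ k) logfun) x a)"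

end

theory Submission
  imports Defs "HOL-Probability.Distributions" "HOL-Real_Asymp.Real_Asymp"
begin

text \<open>
  Write s = sqrt eps and c = alpha / (2 s). On functions P(x^2) exp(-c x^2) the operator
  t = q^-1 p acts on the polynomial P as (i/s) (alpha - 2 s D), with D = d/dy; integrating by
  parts against the Gaussian, t* acts in the same way on P(x^2) x exp(-c x^2). Hence the
  arctangent series sum (-1)^n/(2n+1) (s t)^(2n+1) becomes i sum (alpha - 2 s D)^(2n+1)/(2n+1),
  and since D is nilpotent on polynomials it converges, coefficient by coefficient, to the finite
  Taylor sum i sum_j (-2 s)^j artanh^(j)(alpha)/j! D^j; only finitely many Gaussian functions
  are involved, so the convergence holds in L2. Expanding rho(T) applied to
  ln((1+alpha)/(1-alpha)) = 2 artanh alpha with T = x^2 - 2 s d/dalpha gives the same Taylor sum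
  with D^j rho evaluated at x^2.
\<close>

section \<open>Functions with Gaussian decay\<close>

lemma integrable_exp_neg_square:
  fixes a :: real
  assumes "0 < a"
  shows "integrable lborel (\<lambda>x. exp (- a * x\<^sup>2))"
proof -
  define \<sigma> where "\<sigma> = sqrt (1 / (2 * a))"
  have "0 < \<sigma>" and \<sigma>_sq: "\<sigma>\<^sup>2 = 1 / (2 * a)"
    using assms by (simp_all add: \<sigma>_def)
  then have "(\<lambda>x. sqrt (2 * pi * \<sigma>\<^sup>2) * normal_density 0 \<sigma> x) = (\<lambda>x. exp (- a * x\<^sup>2))"
    using assms by (simp add: normal_density_def \<sigma>_sq mult.commute)
  moreover have "integrable lborel (\<lambda>x. sqrt (2 * pi * \<sigma>\<^sup>2) * normal_density 0 \<sigma> x)"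
    using integrable_normal_density[OF \<open>0 < \<sigma>\<close>] by simp
  ultimately show ?thesis by simp
qed

lemma abs_power_le_exp_square:
  fixes \<delta> x :: real
  assumes "0 < \<delta>"
  shows "\<bar>x\<bar> ^ i \<le> (1 + (real i / \<delta>) ^ i) * exp (\<delta> * x\<^sup>2)"
proof -
  have exp_ge_1: "1 \<le> exp (\<delta> * x\<^sup>2)"
    using assms by simp
  have "(x\<^sup>2) ^ i \<le> (real i / \<delta>) ^ i * exp (\<delta> * x\<^sup>2)"
  proof (cases "i = 0")
    case False
    have "(\<delta> * x\<^sup>2 / real i) ^ i \<le> (1 + \<delta> * x\<^sup>2 / real i) ^ i"
      using assms by (intro power_mono) auto
    also have "\<dots> \<le> exp (\<delta> * x\<^sup>2)"
      using assms False by (intro exp_ge_one_plus_x_over_n_power_n) (auto intro: order.trans[of _ 0])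
    finally show ?thesis
      using assms False by (simp add: power_divide power_mult_distrib field_simps)
  qed (use exp_ge_1 in simp)
  moreover have "\<bar>x\<bar> ^ i \<le> 1 + (x\<^sup>2) ^ i"
  proof (cases "\<bar>x\<bar> \<le> 1")
    case True
    then show ?thesis
      using power_le_one[of "\<bar>x\<bar>" i] by (simp add: add_increasing2)
  next
    case False
    then have "\<bar>x\<bar> \<le> \<bar>x\<bar>\<^sup>2"
      using mult_left_mono[of 1 "\<bar>x\<bar>" "\<bar>x\<bar>"] by (simp add: power2_eq_square)
    then have "\<bar>x\<bar> ^ i \<le> (\<bar>x\<bar>\<^sup>2) ^ i"
      by (intro power_mono) auto
    then show ?thesis by simp
  qed
  ultimately show ?thesis
    using exp_ge_1 by (simp only: distrib_right mult_1_left)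
qed

lemma poly_bounded_by_exp_square:
  fixes Q :: "'a::real_normed_field poly" and \<delta> :: real
  assumes "0 < \<delta>"
  obtains K where "\<And>x. norm (poly Q (of_real x)) \<le> K * exp (\<delta> * x\<^sup>2)"
proof
  fix x :: real
  have "norm (poly Q (of_real x)) \<le> (\<Sum>i\<le>degree Q. norm (coeff Q i * of_real x ^ i))"
    unfolding poly_altdef by (rule norm_sum)
  also have "\<dots> \<le> (\<Sum>i\<le>degree Q. norm (coeff Q i) * ((1 + (real i / \<delta>) ^ i) * exp (\<delta> * x\<^sup>2)))"
    using assms by (intro sum_mono)
      (auto simp: norm_mult norm_power intro!: mult_left_mono abs_power_le_exp_square)
  finally show "norm (poly Q (of_real x))
      \<le> (\<Sum>i\<le>degree Q. norm (coeff Q i) * (1 + (real i / \<delta>) ^ i)) * exp (\<delta> * x\<^sup>2)"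
    by (simp add: sum_distrib_right mult.assoc)
qed

definition gaussian_decay :: "(real \<Rightarrow> 'a::real_normed_vector) \<Rightarrow> bool" where
  "gaussian_decay u \<longleftrightarrow>
     continuous_on UNIV u \<and> (\<exists>K a. 0 < a \<and> (\<forall>x. norm (u x) \<le> K * exp (- a * x\<^sup>2)))"

lemma gaussian_decay_bound:
  assumes "gaussian_decay u"
  shows "\<exists>K a. 0 \<le> K \<and> 0 < a \<and> (\<forall>x. norm (u x) \<le> K * exp (- a * x\<^sup>2))"
proof -
  obtain K a where "0 < a" and bound: "\<And>x. norm (u x) \<le> K * exp (- a * x\<^sup>2)"
    using assms unfolding gaussian_decay_def by blast
  moreover have "0 \<le> K"
    using order.trans[OF norm_ge_zero bound[of 0]] by simp
  ultimately show ?thesis by blast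
qed

lemma gaussian_decay_continuous_on: "gaussian_decay u \<Longrightarrow> continuous_on A u"
  unfolding gaussian_decay_def by (auto intro: continuous_on_subset)

lemma gaussian_decay_borel_measurable:
  "gaussian_decay u \<Longrightarrow> u \<in> borel_measurable borel"
  by (intro borel_measurable_continuous_onI gaussian_decay_continuous_on)

lemma gaussian_decay_poly_times_exp:
  fixes Q :: "'a::real_normed_field poly"
  assumes "0 < c"
  shows "gaussian_decay (\<lambda>x. poly Q (of_real x) * of_real (exp (- c * x\<^sup>2)))"
proof -
  have "0 < c / 2"
    using assms by simp
  then obtain K where K: "\<And>x. norm (poly Q (of_real x)) \<le> K * exp (c / 2 * x\<^sup>2)"
    using poly_bounded_by_exp_square[of "c / 2" Q] by blast
  have "norm (poly Q (of_real x) * of_real (exp (- c * x\<^sup>2))) \<le> K * exp (- (c / 2) * x\<^sup>2)" for x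
  proof -
    have "norm (poly Q (of_real x) * of_real (exp (- c * x\<^sup>2)))
        \<le> K * exp (c / 2 * x\<^sup>2) * exp (- c * x\<^sup>2)"
      using mult_right_mono[OF K, of "exp (- c * x\<^sup>2)" x] by (simp add: norm_mult)
    also have "\<dots> = K * exp (- (c / 2) * x\<^sup>2)"
      by (simp add: mult.assoc exp_add[symmetric])
    finally show ?thesis .
  qed
  moreover have "continuous_on UNIV (\<lambda>x. poly Q (of_real x) * of_real (exp (- c * x\<^sup>2)))"
    by (intro continuous_intros)
  ultimately show ?thesis
    unfolding gaussian_decay_def using assms by (metis half_gt_zero)
qed

lemma gaussian_decay_zero: "gaussian_decay (\<lambda>x. 0)"
  unfolding gaussian_decay_def by (auto intro!: exI[of _ 1])

lemma gaussian_decay_add: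
  assumes "gaussian_decay u" "gaussian_decay v"
  shows "gaussian_decay (\<lambda>x. u x + v x)"
proof -
  obtain K1 a1 where "0 \<le> K1" "0 < a1" and u: "\<And>x. norm (u x) \<le> K1 * exp (- a1 * x\<^sup>2)"
    using gaussian_decay_bound[OF assms(1)] by blast
  obtain K2 a2 where "0 \<le> K2" "0 < a2" and v: "\<And>x. norm (v x) \<le> K2 * exp (- a2 * x\<^sup>2)"
    using gaussian_decay_bound[OF assms(2)] by blast
  define a where "a = min a1 a2"
  have "norm (u x + v x) \<le> (K1 + K2) * exp (- a * x\<^sup>2)" for x
  proof -
    have "exp (- a1 * x\<^sup>2) \<le> exp (- a * x\<^sup>2)" "exp (- a2 * x\<^sup>2) \<le> exp (- a * x\<^sup>2)"
      by (auto simp: a_def intro!: mult_right_mono)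
    then have "K1 * exp (- a1 * x\<^sup>2) + K2 * exp (- a2 * x\<^sup>2) \<le> (K1 + K2) * exp (- a * x\<^sup>2)"
      using \<open>0 \<le> K1\<close> \<open>0 \<le> K2\<close> by (simp add: distrib_right add_mono mult_left_mono)
    then show ?thesis
      using norm_triangle_ineq[of "u x" "v x"] u[of x] v[of x] by linarith
  qed
  moreover have "continuous_on UNIV (\<lambda>x. u x + v x)"
    using assms by (intro continuous_intros gaussian_decay_continuous_on)
  ultimately show ?thesis
    unfolding gaussian_decay_def a_def using \<open>0 < a1\<close> \<open>0 < a2\<close> by (metis min_less_iff_conj)
qed

lemma gaussian_decay_sum:
  "(\<And>j. j \<in> J \<Longrightarrow> gaussian_decay (u j)) \<Longrightarrow> gaussian_decay (\<lambda>x. \<Sum>j\<in>J. u j x)"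
  by (induction J rule: infinite_finite_induct) (simp_all add: gaussian_decay_zero gaussian_decay_add)

lemma gaussian_decay_mult_left:
  fixes u :: "real \<Rightarrow> 'a::real_normed_algebra"
  assumes "gaussian_decay u"
  shows "gaussian_decay (\<lambda>x. k * u x)"
proof -
  obtain K a where "0 \<le> K" "0 < a" and u: "\<And>x. norm (u x) \<le> K * exp (- a * x\<^sup>2)"
    using gaussian_decay_bound[OF assms] by blast
  have "norm (k * u x) \<le> (norm k * K) * exp (- a * x\<^sup>2)" for x
    using order.trans[OF norm_mult_ineq mult_left_mono[OF u]] by (simp add: mult.assoc)
  moreover have "continuous_on UNIV (\<lambda>x. k * u x)"
    using assms by (intro continuous_intros gaussian_decay_continuous_on)
  ultimately show ?thesis
    unfolding gaussian_decay_def using \<open>0 < a\<close> by blast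
qed

lemma gaussian_decay_integrable:
  fixes u :: "real \<Rightarrow> 'a::{banach, second_countable_topology}"
  assumes "gaussian_decay u"
  shows "integrable lborel u"
proof -
  obtain K a where "0 \<le> K" "0 < a" and u: "\<And>x. norm (u x) \<le> K * exp (- a * x\<^sup>2)"
    using gaussian_decay_bound[OF assms] by blast
  show ?thesis
  proof (rule Bochner_Integration.integrable_bound)
    show "integrable lborel (\<lambda>x. K * exp (- a * x\<^sup>2))"
      using integrable_exp_neg_square[OF \<open>0 < a\<close>] by simp
    show "u \<in> borel_measurable lborel"
      using gaussian_decay_borel_measurable[OF assms] by simp
    show "AE x in lborel. norm (u x) \<le> norm (K * exp (- a * x\<^sup>2))"
      using u \<open>0 \<le> K\<close> by simp
  qed
qed

lemma gaussian_decay_tendsto_0: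
  assumes "gaussian_decay u"
  shows "(u \<longlongrightarrow> 0) at_top" "(u \<longlongrightarrow> 0) at_bot"
proof -
  obtain K a where "0 \<le> K" "0 < a" and u: "\<And>x. norm (u x) \<le> K * exp (- a * x\<^sup>2)"
    using gaussian_decay_bound[OF assms] by blast
  have "((\<lambda>x. K * exp (- a * x\<^sup>2)) \<longlongrightarrow> 0) at_top" "((\<lambda>x. K * exp (- a * x\<^sup>2)) \<longlongrightarrow> 0) at_bot"
    using \<open>0 < a\<close> by real_asymp+
  then show "(u \<longlongrightarrow> 0) at_top" "(u \<longlongrightarrow> 0) at_bot"
    by (auto intro: Lim_null_comparison[OF always_eventually] u)
qed

section \<open>Square-integrable functions\<close>

lemma L2_borel_measurable: "L2 u \<Longrightarrow> u \<in> borel_measurable borel"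
  unfolding L2_def by simp

lemma gaussian_decay_L2:
  assumes "gaussian_decay u"
  shows "L2 u"
proof -
  obtain K a where "0 \<le> K" "0 < a" and u: "\<And>x. norm (u x) \<le> K * exp (- a * x\<^sup>2)"
    using gaussian_decay_bound[OF assms] by blast
  note [measurable] = gaussian_decay_borel_measurable[OF assms]
  have sq_bound: "(cmod (u x))\<^sup>2 \<le> K\<^sup>2 * exp (- (2 * a) * x\<^sup>2)" for x
  proof -
    have "(cmod (u x))\<^sup>2 \<le> (K * exp (- a * x\<^sup>2))\<^sup>2"
      using u[of x] by (intro power_mono) auto
    also have "\<dots> = K\<^sup>2 * exp (- (2 * a) * x\<^sup>2)"
      by (simp add: power_mult_distrib power2_eq_square exp_add[symmetric])
    finally show ?thesis .
  qed
  have "integrable lborel (\<lambda>x. (cmod (u x))\<^sup>2)"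
  proof (rule Bochner_Integration.integrable_bound)
    show "integrable lborel (\<lambda>x. K\<^sup>2 * exp (- (2 * a) * x\<^sup>2))"
      using integrable_exp_neg_square[of "2 * a"] \<open>0 < a\<close> by simp
    show "AE x in lborel. norm ((cmod (u x))\<^sup>2) \<le> norm (K\<^sup>2 * exp (- (2 * a) * x\<^sup>2))"
      using sq_bound by simp
  qed measurable
  then show ?thesis
    unfolding L2_def by simp
qed

lemma L2_norm_mult_integrable:
  assumes "L2 u" "L2 v"
  shows "integrable lborel (\<lambda>x. cmod (u x) * cmod (v x))"
proof (rule Bochner_Integration.integrable_bound)
  show "integrable lborel (\<lambda>x. ((cmod (u x))\<^sup>2 + (cmod (v x))\<^sup>2) / 2)"
    using assms unfolding L2_def by auto
  show "AE x in lborel. norm (cmod (u x) * cmod (v x)) \<le> norm (((cmod (u x))\<^sup>2 + (cmod (v x))\<^sup>2) / 2)"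
  proof (intro AE_I2)
    fix x
    show "norm (cmod (u x) * cmod (v x)) \<le> norm (((cmod (u x))\<^sup>2 + (cmod (v x))\<^sup>2) / 2)"
      using sum_squares_bound[of "cmod (u x)" "cmod (v x)"] by (simp add: abs_mult mult_ac)
  qed
  note [measurable] = L2_borel_measurable[OF assms(1)] L2_borel_measurable[OF assms(2)]
  show "(\<lambda>x. cmod (u x) * cmod (v x)) \<in> borel_measurable lborel"
    by measurable
qed

lemma borel_measurable_cnj [measurable]:
  "f \<in> borel_measurable M \<Longrightarrow> (\<lambda>x. cnj (f x :: complex)) \<in> borel_measurable M"
  by (rule borel_measurable_continuous_on[OF continuous_on_cnj[OF continuous_on_id]])

lemma L2_cnj: "L2 u \<Longrightarrow> L2 (\<lambda>x. cnj (u x))"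
  unfolding L2_def by (auto intro: borel_measurable_cnj)

lemma L2_mult_left: "L2 u \<Longrightarrow> L2 (\<lambda>x. k * u x)"
  unfolding L2_def by (auto simp: norm_mult power_mult_distrib)

lemma L2_AE_cong:
  assumes "L2 u" "v \<in> borel_measurable lborel" "AE x in lborel. u x = v x"
  shows "L2 v"
proof -
  have "AE x in lborel. (cmod (u x))\<^sup>2 = (cmod (v x))\<^sup>2"
    using assms(3) by eventually_elim simp
  moreover note [measurable] = assms(2)
  ultimately show ?thesis
    using assms(1) unfolding L2_def by (auto intro: integrable_cong_AE_imp)
qed

lemma l2norm_finite_sum_le:
  assumes "finite J" "\<And>j. j \<in> J \<Longrightarrow> L2 (u j)"
  shows "l2norm (\<lambda>x. \<Sum>j\<in>J. a j * u j x)
       \<le> (\<Sum>j\<in>J. cmod (a j)) * sqrt (\<integral>x. (\<Sum>j\<in>J. cmod (u j x))\<^sup>2 \<partial>lborel)"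
proof -
  define A where "A = (\<Sum>j\<in>J. cmod (a j))"
  define V where "V x = (\<Sum>j\<in>J. cmod (u j x))" for x
  have "0 \<le> A"
    by (simp add: A_def sum_nonneg)
  have pointwise: "(cmod (\<Sum>j\<in>J. a j * u j x))\<^sup>2 \<le> A\<^sup>2 * (V x)\<^sup>2" for x
  proof -
    have "cmod (\<Sum>j\<in>J. a j * u j x) \<le> (\<Sum>j\<in>J. cmod (a j) * cmod (u j x))"
      by (rule order.trans[OF norm_sum]) (simp add: norm_mult)
    also have "\<dots> \<le> (\<Sum>j\<in>J. A * cmod (u j x))"
      unfolding A_def by (intro sum_mono mult_right_mono member_le_sum assms(1)) auto
    finally show ?thesis
      by (simp add: V_def sum_distrib_left power_mult_distrib[symmetric] power_mono)
  qed
  have V_sq: "(V x)\<^sup>2 = (\<Sum>j\<in>J. \<Sum>k\<in>J. cmod (u j x) * cmod (u k x))" for x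
    unfolding V_def power2_eq_square by (rule sum_product)
  have int_V: "integrable lborel (\<lambda>x. A\<^sup>2 * (V x)\<^sup>2)"
    unfolding V_sq by (intro integrable_mult_right Bochner_Integration.integrable_sum L2_norm_mult_integrable assms(2))
  have [measurable]: "(\<lambda>x. \<Sum>j\<in>J. a j * u j x) \<in> borel_measurable borel"
    using L2_borel_measurable[OF assms(2)] by (intro borel_measurable_sum) measurable
  have "(\<integral>x. (cmod (\<Sum>j\<in>J. a j * u j x))\<^sup>2 \<partial>lborel) \<le> (\<integral>x. A\<^sup>2 * (V x)\<^sup>2 \<partial>lborel)"
  proof (rule integral_mono[OF _ int_V pointwise])
    show "integrable lborel (\<lambda>x. (cmod (\<Sum>j\<in>J. a j * u j x))\<^sup>2)"
      by (rule Bochner_Integration.integrable_bound[OF int_V]) (auto simp: abs_mult intro!: AE_I2 pointwise)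
  qed
  then have "l2norm (\<lambda>x. \<Sum>j\<in>J. a j * u j x) \<le> sqrt (A\<^sup>2 * (\<integral>x. (V x)\<^sup>2 \<partial>lborel))"
    unfolding l2norm_def by (simp add: real_sqrt_le_mono)
  then show ?thesis
    using \<open>0 \<le> A\<close> by (simp add: A_def V_def real_sqrt_mult)
qed

lemma l2norm_finite_sum_tendsto_0:
  assumes "finite J" "\<And>j. j \<in> J \<Longrightarrow> L2 (u j)" "\<And>j. j \<in> J \<Longrightarrow> ((\<lambda>N. a N j) \<longlongrightarrow> 0) F"
  shows "((\<lambda>N. l2norm (\<lambda>x. \<Sum>j\<in>J. a N j * u j x)) \<longlongrightarrow> 0) F"
proof (rule Lim_null_comparison)
  define C where "C = sqrt (\<integral>x. (\<Sum>j\<in>J. cmod (u j x))\<^sup>2 \<partial>lborel)"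
  show "\<forall>\<^sub>F N in F. norm (l2norm (\<lambda>x. \<Sum>j\<in>J. a N j * u j x)) \<le> (\<Sum>j\<in>J. cmod (a N j)) * C"
    using l2norm_finite_sum_le[OF assms(1,2)] unfolding C_def l2norm_def by (simp add: always_eventually)
  have "((\<lambda>N. (\<Sum>j\<in>J. cmod (a N j)) * C) \<longlongrightarrow> (\<Sum>j\<in>J. 0) * C) F"
    by (intro tendsto_mult tendsto_sum tendsto_norm_zero tendsto_const assms(3))
  then show "((\<lambda>N. (\<Sum>j\<in>J. cmod (a N j)) * C) \<longlongrightarrow> 0) F"
    by simp
qed

section \<open>The operator t on even Gaussians\<close>

definition gauss :: "real \<Rightarrow> real \<Rightarrow> complex" where
  "gauss c x = of_real (exp (- c * x\<^sup>2))"

definition sq_poly_times :: "(real \<Rightarrow> complex) \<Rightarrow> complex poly \<Rightarrow> real \<Rightarrow> complex" where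
  "sq_poly_times w P x = poly P (of_real (x\<^sup>2)) * w x"

definition gauss_deriv_poly :: "real \<Rightarrow> complex poly \<Rightarrow> complex poly" where
  "gauss_deriv_poly c P = smult 2 (pderiv P) - smult (of_real (2 * c)) P"

definition t_poly :: "real \<Rightarrow> complex poly \<Rightarrow> complex poly" where
  "t_poly c P = smult (- \<i>) (gauss_deriv_poly c P)"

lemma gaussian_decay_gauss: "0 < c \<Longrightarrow> gaussian_decay (gauss c)"
  using gaussian_decay_poly_times_exp[of c 1] by (simp add: gauss_def[abs_def])

lemma gaussian_decay_sq_poly_gauss:
  assumes "0 < c"
  shows "gaussian_decay (sq_poly_times (gauss c) P)"
proof -
  have "sq_poly_times (gauss c) P
      = (\<lambda>x. poly (pcompose P [:0, 0, 1:]) (of_real x) * of_real (exp (- c * x\<^sup>2)))"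
    by (simp add: fun_eq_iff sq_poly_times_def gauss_def poly_pcompose power2_eq_square)
  then show ?thesis
    by (simp only: gaussian_decay_poly_times_exp[OF assms])
qed

lemma gaussian_decay_sq_poly_xgauss:
  assumes "0 < c"
  shows "gaussian_decay (sq_poly_times (\<lambda>x. of_real x * gauss c x) P)"
proof -
  have "sq_poly_times (\<lambda>x. of_real x * gauss c x) P
      = (\<lambda>x. poly (pcompose P [:0, 0, 1:] * [:0, 1:]) (of_real x) * of_real (exp (- c * x\<^sup>2)))"
    by (simp add: fun_eq_iff sq_poly_times_def gauss_def poly_pcompose power2_eq_square mult_ac)
  then show ?thesis
    by (simp only: gaussian_decay_poly_times_exp[OF assms])
qed

lemma has_vector_derivative_sq_poly_gauss:
  "(sq_poly_times (gauss c) P has_vector_derivative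
      sq_poly_times (\<lambda>x. of_real x * gauss c x) (gauss_deriv_poly c P) x) (at x)"
proof -
  have "((\<lambda>x. complex_of_real (x\<^sup>2)) has_vector_derivative of_real (2 * x)) (at x)"
    by (rule has_vector_derivative_of_real) (auto intro!: derivative_eq_intros)
  from field_vector_diff_chain_at[OF this poly_DERIV]
  have "((\<lambda>x. poly P (of_real (x\<^sup>2))) has_vector_derivative
      of_real (2 * x) * poly (pderiv P) (of_real (x\<^sup>2))) (at x)"
    by (simp add: o_def)
  moreover have "(gauss c has_vector_derivative of_real (exp (- c * x\<^sup>2) * (- c * (2 * x)))) (at x)"
    unfolding gauss_def[abs_def] by (auto intro!: derivative_eq_intros)
  ultimately have "(sq_poly_times (gauss c) P has_vector_derivative
      poly P (of_real (x\<^sup>2)) * of_real (exp (- c * x\<^sup>2) * (- c * (2 * x)))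
      + of_real (2 * x) * poly (pderiv P) (of_real (x\<^sup>2)) * gauss c x) (at x)"
    unfolding sq_poly_times_def[abs_def] by (rule has_vector_derivative_mult)
  then show ?thesis
    by (simp add: sq_poly_times_def gauss_deriv_poly_def gauss_def algebra_simps)
qed

lemma t_graph_sq_poly_gauss:
  assumes "0 < c"
  shows "t_graph (sq_poly_times (gauss c) P) (sq_poly_times (gauss c) (t_poly c P))"
  unfolding t_graph_def
proof (intro conjI exI)
  let ?h = "sq_poly_times (\<lambda>x. of_real x * gauss c x) (t_poly c P)"
  have ae: "AE x in lborel. sq_poly_times (gauss c) (t_poly c P) x = ?h x / of_real x"
    using AE_lborel_singleton[of 0] by eventually_elim (simp add: sq_poly_times_def)
  then show "ae_eq (sq_poly_times (gauss c) (t_poly c P)) (\<lambda>x. ?h x / of_real x)"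
    by (simp add: ae_eq_def)
  show L2: "L2 (sq_poly_times (gauss c) (t_poly c P))"
    by (rule gaussian_decay_L2[OF gaussian_decay_sq_poly_gauss[OF assms]])
  note [measurable] = gaussian_decay_borel_measurable[OF gaussian_decay_sq_poly_xgauss[OF assms]]
  show "L2 (\<lambda>x. ?h x / of_real x)"
    by (rule L2_AE_cong[OF L2 _ ae]) measurable
  show "p_graph (sq_poly_times (gauss c) P) ?h"
    unfolding p_graph_def
  proof (intro conjI exI allI)
    show "L2 (sq_poly_times (gauss c) P)" "L2 ?h"
      using assms by (simp_all add: gaussian_decay_L2 gaussian_decay_sq_poly_gauss gaussian_decay_sq_poly_xgauss)
    show "ae_eq (sq_poly_times (gauss c) P) (sq_poly_times (gauss c) P)"
      by (simp add: ae_eq_def)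
    fix a b
    have "(\<lambda>x. \<i> * ?h x) = sq_poly_times (\<lambda>x. of_real x * gauss c x) (gauss_deriv_poly c P)"
      by (simp add: fun_eq_iff sq_poly_times_def t_poly_def mult.assoc)
    moreover have "(LBINT x=a..b. sq_poly_times (\<lambda>x. of_real x * gauss c x) (gauss_deriv_poly c P) x)
        = sq_poly_times (gauss c) P b - sq_poly_times (gauss c) P a"
      using gaussian_decay_continuous_on[OF gaussian_decay_sq_poly_xgauss[OF assms]]
      by (intro interval_integral_FTC_finite has_vector_derivative_at_within[OF has_vector_derivative_sq_poly_gauss])
    ultimately show "sq_poly_times (gauss c) P b - sq_poly_times (gauss c) P a = (LBINT x=a..b. \<i> * ?h x)"
      by simp
  qed
qed

lemma pow_graph_funpow:
  assumes "\<And>P. L2 (\<phi> P)" "\<And>P. R (\<phi> P) (\<phi> (A P))"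
  shows "pow_graph R n (\<phi> P) (\<phi> ((A ^^ n) P))"
proof (induction n arbitrary: P)
  case 0
  then show ?case
    using assms(1) by (simp add: ae_eq_def)
next
  case (Suc n)
  then show ?case
    using assms(2)[of P] by (auto simp: funpow_Suc_right simp del: funpow.simps)
qed

section \<open>Integration by parts and the adjoint t* on odd Gaussians\<close>

definition ivl_kernel :: "real \<Rightarrow> real \<Rightarrow> real" where
  "ivl_kernel s x = (if 0 < s \<and> s < x then 1 else if x < s \<and> s < 0 then -1 else 0)"

lemma ivl_kernel_borel_measurable [measurable]:
  "(\<lambda>p. ivl_kernel (fst p) (snd p)) \<in> borel_measurable (borel \<Otimes>\<^sub>M borel)"
  unfolding ivl_kernel_def by measurable

lemma abs_ivl_kernel_le_1: "\<bar>ivl_kernel s x\<bar> \<le> 1"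
  by (simp add: ivl_kernel_def)

lemma ivl_kernel_nonzero_imp_square_le:
  assumes "ivl_kernel s x \<noteq> 0"
  shows "s\<^sup>2 \<le> x\<^sup>2"
proof (cases "0 < s")
  case True
  with assms have "s < x"
    by (auto simp: ivl_kernel_def split: if_splits)
  with True show ?thesis
    by (intro power_mono) auto
next
  case False
  with assms have "x < s" "s \<le> 0"
    by (auto simp: ivl_kernel_def split: if_splits)
  then have "(- s)\<^sup>2 \<le> (- x)\<^sup>2"
    by (intro power_mono) auto
  then show ?thesis by simp
qed

lemma interval_integral_eq_integral_ivl_kernel:
  fixes u :: "real \<Rightarrow> 'a::{banach, second_countable_topology}"
  shows "interval_lebesgue_integral lborel (ereal 0) (ereal x) u = (\<integral>s. ivl_kernel s x *\<^sub>R u s \<partial>lborel)"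
proof (cases "0 \<le> x")
  case True
  then have "interval_lebesgue_integral lborel (ereal 0) (ereal x) u = (\<integral>s. indicator {0<..<x} s *\<^sub>R u s \<partial>lborel)"
    by (simp add: interval_lebesgue_integral_def set_lebesgue_integral_def zero_ereal_def)
  also have "\<dots> = (\<integral>s. ivl_kernel s x *\<^sub>R u s \<partial>lborel)"
    using True by (intro Bochner_Integration.integral_cong) (auto simp: ivl_kernel_def split: split_indicator)
  finally show ?thesis .
next
  case False
  then have "interval_lebesgue_integral lborel (ereal 0) (ereal x) u = - (\<integral>s. indicator {x<..<0} s *\<^sub>R u s \<partial>lborel)"
    by (simp add: interval_lebesgue_integral_def set_lebesgue_integral_def zero_ereal_def)
  also have "\<dots> = (\<integral>s. ivl_kernel s x *\<^sub>R u s \<partial>lborel)"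
    unfolding integral_minus[symmetric]
    using False by (intro Bochner_Integration.integral_cong) (auto simp: ivl_kernel_def split: split_indicator)
  finally show ?thesis .
qed

lemma interval_integral_derivative_gaussian_decay:
  fixes \<psi> \<psi>' :: "real \<Rightarrow> complex" and a b :: ereal
  assumes \<psi>: "\<And>x. (\<psi> has_vector_derivative \<psi>' x) (at x)" "gaussian_decay \<psi>'"
    and "a < b" "((\<psi> \<circ> real_of_ereal) \<longlongrightarrow> A) (at_right a)" "((\<psi> \<circ> real_of_ereal) \<longlongrightarrow> B) (at_left b)"
  shows "interval_lebesgue_integral lborel a b \<psi>' = B - A"
proof (rule interval_integral_FTC_integrable[OF \<open>a < b\<close> \<psi>(1)])
  show "isCont \<psi>' x" for x
    using gaussian_decay_continuous_on[OF \<psi>(2), of UNIV] by (simp add: continuous_on_eq_continuous_at)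
  show "set_integrable lborel (einterval a b) \<psi>'"
    unfolding set_integrable_def
    by (intro integrable_mult_indicator gaussian_decay_integrable \<psi>(2)) simp
qed (use assms in auto)

lemma integral_ivl_kernel_derivative:
  fixes \<psi> \<psi>' :: "real \<Rightarrow> complex"
  assumes \<psi>: "\<And>x. (\<psi> has_vector_derivative \<psi>' x) (at x)" "gaussian_decay \<psi>" "gaussian_decay \<psi>'"
    and "s \<noteq> 0"
  shows "(\<integral>x. ivl_kernel s x *\<^sub>R \<psi>' x \<partial>lborel) = - \<psi> s"
proof -
  have cont: "(\<psi> \<longlongrightarrow> \<psi> s) (at_right s)" "(\<psi> \<longlongrightarrow> \<psi> s) (at_left s)"
    using gaussian_decay_continuous_on[OF \<psi>(2), of UNIV]
    by (simp_all add: continuous_on_eq_continuous_at continuous_at filterlim_at_split)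
  consider "0 < s" | "s < 0"
    using \<open>s \<noteq> 0\<close> by linarith
  then show ?thesis
  proof cases
    case 1
    have "(\<integral>x. ivl_kernel s x *\<^sub>R \<psi>' x \<partial>lborel) = interval_lebesgue_integral lborel (ereal s) \<infinity> \<psi>'"
      using 1 by (auto intro!: Bochner_Integration.integral_cong
          simp: interval_lebesgue_integral_def set_lebesgue_integral_def ivl_kernel_def split: split_indicator)
    also have "\<dots> = 0 - \<psi> s"
      using cont gaussian_decay_tendsto_0[OF \<psi>(2)]
      by (intro interval_integral_derivative_gaussian_decay[OF \<psi>(1,3)]) (simp_all add: ereal_tendsto_simps1)
    finally show ?thesis by simp
  next
    case 2
    have "(\<integral>x. ivl_kernel s x *\<^sub>R \<psi>' x \<partial>lborel) = (\<integral>x. - (indicator {..<s} x *\<^sub>R \<psi>' x) \<partial>lborel)"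
      using 2 by (intro Bochner_Integration.integral_cong) (auto simp: ivl_kernel_def split: split_indicator)
    also have "\<dots> = - interval_lebesgue_integral lborel (-\<infinity>) (ereal s) \<psi>'"
      by (simp add: interval_lebesgue_integral_def set_lebesgue_integral_def)
    also have "interval_lebesgue_integral lborel (-\<infinity>) (ereal s) \<psi>' = \<psi> s - 0"
      using cont gaussian_decay_tendsto_0[OF \<psi>(2)]
      by (intro interval_integral_derivative_gaussian_decay[OF \<psi>(1,3)]) (simp_all add: ereal_tendsto_simps1)
    finally show ?thesis by simp
  qed
qed

lemma integral_derivative_gaussian_decay_eq_0:
  fixes \<psi> \<psi>' :: "real \<Rightarrow> complex"
  assumes \<psi>: "\<And>x. (\<psi> has_vector_derivative \<psi>' x) (at x)" "gaussian_decay \<psi>" "gaussian_decay \<psi>'"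
  shows "(\<integral>x. \<psi>' x \<partial>lborel) = 0"
proof -
  have "interval_lebesgue_integral lborel (-\<infinity>) \<infinity> \<psi>' = 0 - 0"
    using gaussian_decay_tendsto_0[OF \<psi>(2)]
    by (intro interval_integral_derivative_gaussian_decay[OF \<psi>(1,3)]) (simp_all add: ereal_tendsto_simps1)
  then show ?thesis
    by (simp add: interval_lebesgue_integral_def set_lebesgue_integral_def)
qed

lemma (in pair_sigma_finite) integrable_product_bound:
  fixes f :: "_ \<Rightarrow> _::{banach, second_countable_topology}"
  assumes f: "f \<in> borel_measurable (M1 \<Otimes>\<^sub>M M2)" and g: "integrable M1 g" and h: "integrable M2 h"
    and bound: "\<And>x y. norm (f (x, y)) \<le> g x * h y"
  shows "integrable (M1 \<Otimes>\<^sub>M M2) f"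
proof (rule Fubini_integrable[OF f])
  have slice: "integrable M2 (\<lambda>y. f (x, y))" if "x \<in> space M1" for x
  proof (rule Bochner_Integration.integrable_bound[OF integrable_mult_right[OF h, of "g x"]])
    show "(\<lambda>y. f (x, y)) \<in> borel_measurable M2"
      using f that by (rule measurable_Pair2)
    show "AE y in M2. norm (f (x, y)) \<le> norm (g x * h y)"
      using bound by (auto intro: order.trans[OF _ abs_ge_self])
  qed
  then show "AE x in M1. integrable M2 (\<lambda>y. f (x, y))"
    by (rule AE_I2)
  show "integrable M1 (\<lambda>x. \<integral>y. norm (f (x, y)) \<partial>M2)"
  proof (rule Bochner_Integration.integrable_bound[OF integrable_mult_left[OF g, of "integral\<^sup>L M2 h"]])
    show "(\<lambda>x. \<integral>y. norm (f (x, y)) \<partial>M2) \<in> borel_measurable M1"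
      using f by (intro M2.borel_measurable_lebesgue_integral) (simp add: case_prod_unfold)
    show "AE x in M1. norm (\<integral>y. norm (f (x, y)) \<partial>M2) \<le> norm (g x * integral\<^sup>L M2 h)"
    proof (rule AE_I2)
      fix x
      assume "x \<in> space M1"
      have "(\<integral>y. norm (f (x, y)) \<partial>M2) \<le> (\<integral>y. g x * h y \<partial>M2)"
        using slice[OF \<open>x \<in> space M1\<close>] h bound by (intro integral_mono) auto
      then show "norm (\<integral>y. norm (f (x, y)) \<partial>M2) \<le> norm (g x * integral\<^sup>L M2 h)"
        by simp
    qed
  qed
qed

lemma integrable_ivl_kernel_product:
  assumes "L2 u" "gaussian_decay \<phi>"
  shows "integrable (lborel \<Otimes>\<^sub>M lborel) (\<lambda>(s, x). (ivl_kernel s x *\<^sub>R u s) * \<phi> x)"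
proof -
  obtain K a where "0 \<le> K" "0 < a" and \<phi>: "\<And>x. norm (\<phi> x) \<le> K * exp (- a * x\<^sup>2)"
    using gaussian_decay_bound[OF assms(2)] by blast
  define b where "b = a / 2"
  have "0 < b"
    using \<open>0 < a\<close> by (simp add: b_def)
  have bound: "norm ((ivl_kernel s x *\<^sub>R u s) * \<phi> x)
      \<le> (cmod (u s) * cmod (of_real K * gauss b s)) * exp (- b * x\<^sup>2)" for s x
  proof (cases "ivl_kernel s x = 0")
    case False
    have "exp (- a * x\<^sup>2) = exp (- b * x\<^sup>2) * exp (- b * x\<^sup>2)"
      by (simp add: b_def exp_add[symmetric])
    also have "\<dots> \<le> exp (- b * s\<^sup>2) * exp (- b * x\<^sup>2)"
      using ivl_kernel_nonzero_imp_square_le[OF False] \<open>0 < b\<close> by (intro mult_right_mono) auto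
    finally have \<phi>_bound: "norm (\<phi> x) \<le> K * exp (- b * s\<^sup>2) * exp (- b * x\<^sup>2)"
      using \<phi>[of x] \<open>0 \<le> K\<close> by (metis mult.assoc mult_left_mono order.trans)
    have "norm ((ivl_kernel s x *\<^sub>R u s) * \<phi> x) = \<bar>ivl_kernel s x\<bar> * (cmod (u s) * cmod (\<phi> x))"
      by (simp add: norm_mult)
    also have "\<dots> \<le> 1 * (cmod (u s) * (K * exp (- b * s\<^sup>2) * exp (- b * x\<^sup>2)))"
      using \<phi>_bound by (intro mult_mono mult_left_mono abs_ivl_kernel_le_1) auto
    finally show ?thesis
      using \<open>0 \<le> K\<close> by (simp add: gauss_def norm_mult mult_ac)
  qed (simp add: \<open>0 \<le> K\<close>)
  note [measurable] = L2_borel_measurable[OF assms(1)] gaussian_decay_borel_measurable[OF assms(2)]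
  show ?thesis
  proof (rule lborel_pair.integrable_product_bound[where g="\<lambda>s. cmod (u s) * cmod (of_real K * gauss b s)"
        and h="\<lambda>x. exp (- b * x\<^sup>2)"])
    show "integrable lborel (\<lambda>s. cmod (u s) * cmod (of_real K * gauss b s))"
      using \<open>0 < b\<close>
      by (intro L2_norm_mult_integrable assms(1) gaussian_decay_L2 gaussian_decay_mult_left gaussian_decay_gauss)
    show "integrable lborel (\<lambda>x. exp (- b * x\<^sup>2))"
      by (rule integrable_exp_neg_square[OF \<open>0 < b\<close>])
  qed (use bound in auto)
qed

lemma integration_by_parts_L2_gaussian_decay:
  fixes G u \<psi> \<psi>' :: "real \<Rightarrow> complex"
  assumes u: "L2 u" and G: "\<And>a b. G b - G a = (LBINT x=a..b. u x)"
    and \<psi>: "\<And>x. (\<psi> has_vector_derivative \<psi>' x) (at x)" "gaussian_decay \<psi>" "gaussian_decay \<psi>'"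
  shows "integrable lborel (\<lambda>x. G x * \<psi>' x)"
    and "(\<integral>x. u x * \<psi> x \<partial>lborel) = - (\<integral>x. G x * \<psi>' x \<partial>lborel)"
proof -
  \<comment> \<open>G need not be differentiable, so instead of the product rule we use Fubini for H:
    integrating out s gives (G x - G 0) * \<psi>' x, integrating out x gives - u s * \<psi> s.\<close>
  define H where "H s x = (ivl_kernel s x *\<^sub>R u s) * \<psi>' x" for s x
  have H: "integrable (lborel \<Otimes>\<^sub>M lborel) (case_prod H)"
    unfolding H_def using integrable_ivl_kernel_product[OF u \<psi>(3)] by (simp add: case_prod_beta')
  have H_s: "(\<integral>s. H s x \<partial>lborel) = (G x - G 0) * \<psi>' x" for x
    unfolding H_def integral_mult_left_zero by (simp only: G[of x 0] interval_integral_eq_integral_ivl_kernel)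
  have H_x: "(\<integral>x. H s x \<partial>lborel) = - (u s * \<psi> s)" if "s \<noteq> 0" for s
  proof -
    have "(\<integral>x. H s x \<partial>lborel) = u s * (\<integral>x. ivl_kernel s x *\<^sub>R \<psi>' x \<partial>lborel)"
      unfolding H_def integral_mult_right_zero[symmetric]
      by (intro Bochner_Integration.integral_cong) (simp_all add: scaleR_conv_of_real mult_ac)
    then show ?thesis
      using integral_ivl_kernel_derivative[OF \<psi> that] by simp
  qed
  have int_G0: "integrable lborel (\<lambda>x. (G x - G 0) * \<psi>' x)"
    using lborel_pair.integrable_snd[OF H] by (simp add: H_s)
  have int_\<psi>': "integrable lborel (\<lambda>x. G 0 * \<psi>' x)"
    using gaussian_decay_integrable[OF \<psi>(3)] by simp
  have "(\<lambda>x. G x * \<psi>' x) = (\<lambda>x. (G x - G 0) * \<psi>' x + G 0 * \<psi>' x)"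
    by (simp add: algebra_simps)
  then show int_G: "integrable lborel (\<lambda>x. G x * \<psi>' x)"
    using int_G0 int_\<psi>' by simp
  note [measurable] = L2_borel_measurable[OF u] gaussian_decay_borel_measurable[OF \<psi>(2)]
    borel_measurable_integrable[OF lborel_pair.integrable_fst[OF H]]
  have "(\<integral>x. u x * \<psi> x \<partial>lborel) = (\<integral>s. - (\<integral>x. H s x \<partial>lborel) \<partial>lborel)"
    using AE_lborel_singleton[of 0] by (intro integral_cong_AE) (auto elim!: AE_mp simp: H_x)
  also have "\<dots> = - (\<integral>x. (\<integral>s. H s x \<partial>lborel) \<partial>lborel)"
    by (simp add: lborel_pair.Fubini_integral[OF H])
  also have "(\<integral>x. (\<integral>s. H s x \<partial>lborel) \<partial>lborel) = (\<integral>x. G x * \<psi>' x \<partial>lborel) - G 0 * (\<integral>x. \<psi>' x \<partial>lborel)"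
    using int_G int_\<psi>' by (simp add: H_s algebra_simps)
  finally show "(\<integral>x. u x * \<psi> x \<partial>lborel) = - (\<integral>x. G x * \<psi>' x \<partial>lborel)"
    by (simp add: integral_derivative_gaussian_decay_eq_0[OF \<psi>])
qed

lemma interval_integral_cnj:
  "interval_lebesgue_integral lborel a b (\<lambda>x. cnj (g x)) = cnj (interval_lebesgue_integral lborel a b g)"
proof -
  have "(\<integral>x. indicator A x *\<^sub>R cnj (g x) \<partial>lborel) = cnj (\<integral>x. indicator A x *\<^sub>R g x \<partial>lborel)" for A
    by (simp add: Bochner_Integration.integral_cnj[symmetric] complex_cnj_scaleR
        del: Bochner_Integration.integral_cnj)
  then show ?thesis
    unfolding interval_lebesgue_integral_def set_lebesgue_integral_def by simp
qed

lemma t_adj_graph_sq_poly_xgauss: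
  assumes "0 < c"
  shows "t_adj_graph (sq_poly_times (\<lambda>x. of_real x * gauss c x) P)
                     (sq_poly_times (\<lambda>x. of_real x * gauss c x) (t_poly c P))"
  unfolding t_adj_graph_def
proof (intro conjI allI impI)
  let ?w = "\<lambda>x. of_real x * gauss c x"
  let ?\<psi> = "sq_poly_times (gauss c) P" and ?\<psi>' = "sq_poly_times ?w (gauss_deriv_poly c P)"
  show "L2 (sq_poly_times ?w P)" "L2 (sq_poly_times ?w (t_poly c P))"
    using assms by (simp_all add: gaussian_decay_L2 gaussian_decay_sq_poly_xgauss)
  fix f h
  assume "t_graph f h"
  then obtain h0 F where h: "L2 h" "ae_eq h (\<lambda>x. h0 x / of_real x)" and "L2 f" "L2 h0"
    and F: "ae_eq F f" "\<And>a b. F b - F a = (LBINT x=a..b. \<i> * h0 x)"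
    unfolding t_graph_def p_graph_def by blast
  \<comment> \<open>cnj F is a primitive of u, so integration by parts moves the derivative of f onto the Gaussian.\<close>
  define u where "u x = cnj (\<i> * h0 x)" for x
  define G where "G x = cnj (F x)" for x
  have "G b - G a = (LBINT x=a..b. u x)" for a b
    unfolding G_def u_def interval_integral_cnj complex_cnj_diff[symmetric] F(2) ..
  note ibp = integration_by_parts_L2_gaussian_decay[OF _ this has_vector_derivative_sq_poly_gauss
      gaussian_decay_sq_poly_gauss[OF assms] gaussian_decay_sq_poly_xgauss[OF assms]]
  have "L2 u"
    unfolding u_def using \<open>L2 h0\<close> by (intro L2_cnj L2_mult_left)
  note [measurable] = L2_borel_measurable[OF \<open>L2 h\<close>] L2_borel_measurable[OF \<open>L2 h0\<close>]
    L2_borel_measurable[OF \<open>L2 f\<close>] borel_measurable_integrable[OF ibp(1)[OF \<open>L2 u\<close>]]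
    gaussian_decay_borel_measurable[OF gaussian_decay_sq_poly_gauss[OF assms]]
    gaussian_decay_borel_measurable[OF gaussian_decay_sq_poly_xgauss[OF assms]]
  have "l2inner h (sq_poly_times ?w P) = (\<integral>x. \<i> * (u x * ?\<psi> x) \<partial>lborel)"
    unfolding l2inner_def
  proof (rule integral_cong_AE)
    show "AE x in lborel. cnj (h x) * sq_poly_times ?w P x = \<i> * (u x * ?\<psi> x)"
      using h(2) AE_lborel_singleton[of 0] unfolding ae_eq_def
      by eventually_elim (auto simp: u_def sq_poly_times_def mult_ac)
  qed (simp_all add: u_def)
  also have "\<dots> = - \<i> * (\<integral>x. G x * ?\<psi>' x \<partial>lborel)"
    using ibp(2)[OF \<open>L2 u\<close>] by simp
  also have "\<dots> = l2inner f (sq_poly_times ?w (t_poly c P))"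
    unfolding l2inner_def integral_mult_right_zero[symmetric]
  proof (rule integral_cong_AE)
    show "AE x in lborel. - \<i> * (G x * ?\<psi>' x) = cnj (f x) * sq_poly_times ?w (t_poly c P) x"
      using F(1) unfolding ae_eq_def
      by eventually_elim (auto simp: G_def sq_poly_times_def t_poly_def)
  qed simp_all
  finally show "l2inner h (sq_poly_times ?w P) = l2inner f (sq_poly_times ?w (t_poly c P))" .
qed

section \<open>Derivatives of ln ((1 + a) / (1 - a))\<close>

definition artanh_coeff :: "nat \<Rightarrow> real" where
  "artanh_coeff k = (if odd k then 1 / real k else 0)"

definition artanh_deriv_coeff :: "nat \<Rightarrow> nat \<Rightarrow> real" where
  "artanh_deriv_coeff j m = artanh_coeff (m + j) * real (m + j choose j)"

text \<open>The j-th derivative of ln ((1 + a) / (1 - a)) = 2 artanh a on (-1, 1), as a power series.\<close>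

definition ln_ratio_deriv :: "nat \<Rightarrow> real \<Rightarrow> real" where
  "ln_ratio_deriv j a = 2 * fact j * (\<Sum>m. artanh_deriv_coeff j m * a ^ m)"

lemma diffs_artanh_deriv_coeff:
  "diffs (artanh_deriv_coeff j) = (\<lambda>m. real (Suc j) * artanh_deriv_coeff (Suc j) m)"
proof
  fix m
  have "Suc m * (Suc (m + j) choose j) = Suc (m + j) * (m + j choose j)"
    using binomial_absorb_comp[of "Suc (m + j)" j] by (simp add: Suc_diff_le)
  also have "\<dots> = Suc j * (Suc (m + j) choose Suc j)"
    using Suc_times_binomial_eq[of "m + j" j] by simp
  finally have "real (Suc m) * real (Suc (m + j) choose j) = real (Suc j) * real (Suc (m + j) choose Suc j)"
    by (metis of_nat_mult)
  then show "diffs (artanh_deriv_coeff j) m = real (Suc j) * artanh_deriv_coeff (Suc j) m"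
    by (simp add: diffs_def artanh_deriv_coeff_def mult_ac)
qed

lemma abs_artanh_coeff_le_1: "\<bar>artanh_coeff k\<bar> \<le> 1"
  by (auto simp: artanh_coeff_def elim!: oddE)

lemma summable_artanh_deriv_coeff:
  "\<bar>a\<bar> < 1 \<Longrightarrow> summable (\<lambda>m. artanh_deriv_coeff j m * a ^ m)"
proof (induction j arbitrary: a)
  case 0
  show ?case
  proof (rule summable_comparison_test)
    show "\<exists>N. \<forall>m\<ge>N. norm (artanh_deriv_coeff 0 m * a ^ m) \<le> \<bar>a\<bar> ^ m"
      using abs_artanh_coeff_le_1
      by (auto simp: artanh_deriv_coeff_def abs_mult power_abs intro!: mult_left_le_one_le)
    show "summable (\<lambda>m. \<bar>a\<bar> ^ m)"
      using 0 by (intro summable_geometric) simp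
  qed
next
  case (Suc j)
  have "summable (\<lambda>m. diffs (artanh_deriv_coeff j) m * a ^ m)"
    by (rule termdiff_converges[of a 1]) (use Suc in auto)
  then show ?case
    by (simp add: diffs_artanh_deriv_coeff mult.assoc)
qed

lemma has_real_derivative_ln_ratio_deriv:
  assumes "\<bar>a\<bar> < 1"
  shows "(ln_ratio_deriv j has_real_derivative ln_ratio_deriv (Suc j) a) (at a)"
proof -
  define r where "r = (1 + \<bar>a\<bar>) / 2"
  have r: "\<bar>r\<bar> < 1" "\<bar>a\<bar> < \<bar>r\<bar>"
    using assms by (auto simp: r_def)
  have "((\<lambda>x. \<Sum>m. artanh_deriv_coeff j m * x ^ m) has_real_derivative
      (\<Sum>m. diffs (artanh_deriv_coeff j) m * a ^ m)) (at a)"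
    using r(2) by (intro termdiffs_strong[OF summable_artanh_deriv_coeff[OF r(1)]]) simp
  moreover have "(\<Sum>m. diffs (artanh_deriv_coeff j) m * a ^ m)
      = real (Suc j) * (\<Sum>m. artanh_deriv_coeff (Suc j) m * a ^ m)"
    unfolding diffs_artanh_deriv_coeff mult.assoc
    by (rule suminf_mult[OF summable_artanh_deriv_coeff[OF assms]])
  ultimately show ?thesis
    unfolding ln_ratio_deriv_def[abs_def] by (auto intro!: derivative_eq_intros simp: mult_ac)
qed

lemma odd_binomial_series_sums:
  assumes "\<bar>a\<bar> < 1"
  shows "(\<lambda>n. real (2 * n + 1 choose j) / real (2 * n + 1) * a ^ (2 * n + 1 - j))
           sums (ln_ratio_deriv j a / (2 * fact j))"
proof -
  define f where "f k = artanh_coeff k * real (k choose j) * a ^ (k - j)" for k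
  have "(\<lambda>m. f (m + j)) sums (\<Sum>m. artanh_deriv_coeff j m * a ^ m)"
    using summable_sums[OF summable_artanh_deriv_coeff[OF assms]]
    by (simp add: f_def artanh_deriv_coeff_def)
  then have "f sums (ln_ratio_deriv j a / (2 * fact j))"
    by (subst (asm) sums_zero_iff_shift) (simp_all add: f_def ln_ratio_deriv_def)
  moreover have "f k = 0" if "k \<notin> range (\<lambda>n. 2 * n + 1)" for k
  proof -
    have "even k"
      using that by (metis odd_two_times_div_two_succ rangeI)
    then show ?thesis
      by (simp add: f_def artanh_coeff_def)
  qed
  ultimately have "(\<lambda>n. f (2 * n + 1)) sums (ln_ratio_deriv j a / (2 * fact j))"
    by (subst sums_mono_reindex) (auto intro: strict_monoI)
  then show ?thesis
    by (simp add: f_def artanh_coeff_def)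
qed

lemma ln_ratio_deriv_0:
  assumes "\<bar>a\<bar> < 1"
  shows "ln_ratio_deriv 0 a = ln ((1 + a) / (1 - a))"
proof -
  have "0 < (1 + a) / (1 - a)" "((1 + a) / (1 - a) - 1) / ((1 + a) / (1 - a) + 1) = a"
    using assms by (auto simp: abs_less_iff field_simps)
  then have "(\<lambda>n. 2 * (a ^ (2 * n + 1) / real (2 * n + 1))) sums ln ((1 + a) / (1 - a))"
    using ln_series_quadratic[of "(1 + a) / (1 - a)"] by simp
  moreover have "(\<lambda>n. 2 * (a ^ (2 * n + 1) / real (2 * n + 1))) sums (2 * (ln_ratio_deriv 0 a / 2))"
    using sums_mult[OF odd_binomial_series_sums[OF assms, of 0], of 2] by simp
  ultimately show ?thesis
    using sums_unique2 by fastforce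
qed

section \<open>Binomial expansions of the operators T and t\<close>

lemma binomial_sum_Suc:
  fixes A B :: "'a::comm_ring_1" and u :: "nat \<Rightarrow> 'a"
  shows "A * (\<Sum>j\<le>k. of_nat (k choose j) * A ^ (k - j) * B ^ j * u j)
       + B * (\<Sum>j\<le>k. of_nat (k choose j) * A ^ (k - j) * B ^ j * u (Suc j))
       = (\<Sum>j\<le>Suc k. of_nat (Suc k choose j) * A ^ (Suc k - j) * B ^ j * u j)"
proof -
  let ?S1 = "\<Sum>i\<le>k. of_nat (k choose i) * A ^ (k - i) * B ^ Suc i * u (Suc i)"
  let ?S2 = "\<Sum>i\<le>k. of_nat (k choose Suc i) * A ^ (k - i) * B ^ Suc i * u (Suc i)"
  have "(\<Sum>j\<le>Suc k. of_nat (Suc k choose j) * A ^ (Suc k - j) * B ^ j * u j)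
      = A ^ Suc k * u 0 + (?S1 + ?S2)"
    by (subst sum.atMost_Suc_shift) (simp add: sum.distrib[symmetric] algebra_simps)
  also have "\<dots> = ?S1 + (A ^ Suc k * u 0 + ?S2)"
    by (simp only: add_ac)
  also have "A ^ Suc k * u 0 + ?S2 = (\<Sum>j\<le>Suc k. of_nat (k choose j) * A ^ (Suc k - j) * B ^ j * u j)"
    by (subst sum.atMost_Suc_shift) simp
  also have "\<dots> = (\<Sum>j\<le>k. of_nat (k choose j) * A ^ (Suc k - j) * B ^ j * u j)"
    by (simp add: binomial_eq_0)
  also have "\<dots> = A * (\<Sum>j\<le>k. of_nat (k choose j) * A ^ (k - j) * B ^ j * u j)"
    by (auto simp: sum_distrib_left Suc_diff_le mult_ac intro!: sum.cong)
  also have "?S1 = B * (\<Sum>j\<le>k. of_nat (k choose j) * A ^ (k - j) * B ^ j * u (Suc j))"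
    by (simp add: sum_distrib_left algebra_simps)
  finally show ?thesis
    by (simp only: add.commute)
qed

lemma Tcal_funpow_logfun:
  assumes "\<bar>a\<bar> < 1"
  shows "(Tcal \<epsilon> ^^ k) logfun x a = (\<Sum>j\<le>k. of_nat (k choose j) * of_real (x\<^sup>2) ^ (k - j)
           * of_real (- 2 * sqrt \<epsilon>) ^ j * of_real (ln_ratio_deriv j a))"
  using assms
proof (induction k arbitrary: a)
  case 0
  then show ?case
    by (simp add: logfun_def ln_ratio_deriv_0)
next
  case (Suc k)
  define A :: complex where "A = of_real (x\<^sup>2)"
  define B :: complex where "B = of_real (- 2 * sqrt \<epsilon>)"
  define S where "S b = (\<Sum>j\<le>k. of_nat (k choose j) * A ^ (k - j) * B ^ j * of_real (ln_ratio_deriv j b))" for b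
  define S' where "S' = (\<Sum>j\<le>k. of_nat (k choose j) * A ^ (k - j) * B ^ j * of_real (ln_ratio_deriv (Suc j) a))"
  have "(S has_vector_derivative S') (at a)"
    unfolding S_def[abs_def] S'_def
    by (intro has_vector_derivative_sum has_vector_derivative_mult_right has_vector_derivative_of_real
        has_real_derivative_ln_ratio_deriv Suc.prems)
  then have "((\<lambda>b. (Tcal \<epsilon> ^^ k) logfun x b) has_vector_derivative S') (at a)"
  proof (rule has_vector_derivative_transform_within_open[of _ _ _ "{-1<..<1}"])
    show "S b = (Tcal \<epsilon> ^^ k) logfun x b" if "b \<in> {-1<..<1}" for b
      using Suc.IH[of b] that by (simp add: S_def A_def B_def abs_less_iff)
  qed (use Suc.prems in \<open>auto simp: abs_less_iff\<close>)
  then have "vector_derivative (\<lambda>b. (Tcal \<epsilon> ^^ k) logfun x b) (at a) = S'"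
    by (rule vector_derivative_at)
  then have "(Tcal \<epsilon> ^^ Suc k) logfun x a = A * S a + B * S'"
    using Suc.IH[OF Suc.prems] unfolding funpow.simps o_def Tcal_def[of \<epsilon> "(Tcal \<epsilon> ^^ k) logfun"]
    by (simp add: A_def B_def S_def)
  also have "\<dots> = (\<Sum>j\<le>Suc k. of_nat (Suc k choose j) * A ^ (Suc k - j) * B ^ j * of_real (ln_ratio_deriv j a))"
    unfolding S_def S'_def by (rule binomial_sum_Suc)
  finally show ?case
    by (simp add: A_def B_def)
qed

lemma higher_pderiv_monom_binomial:
  "(pderiv ^^ j) (monom a k) = monom (a * of_nat ((k choose j) * fact j)) (k - j)"
proof (induction j)
  case (Suc j)
  have "(k - j) * (k choose j) = Suc j * (k choose Suc j)"
    using binomial_absorb_comp[of k j] binomial_absorption[of j k] by simp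
  then have "(k - j) * ((k choose j) * fact j) = (k choose Suc j) * fact (Suc j)"
    by (simp only: mult.assoc[symmetric]) (simp add: distrib_left distrib_right mult_ac)
  then have "of_nat (k - j) * (a * of_nat ((k choose j) * fact j)) = a * of_nat ((k choose Suc j) * fact (Suc j))"
    by (simp only: of_nat_mult[symmetric] mult.left_commute[of "of_nat (k - j)"])
  then show ?case
    by (simp add: Suc pderiv_monom)
qed simp

lemma poly_higher_pderiv:
  "poly ((pderiv ^^ j) P) y = (\<Sum>k\<le>degree P. coeff P k * of_nat ((k choose j) * fact j) * y ^ (k - j))"
proof -
  have "(pderiv ^^ j) P = (\<Sum>k\<le>degree P. monom (coeff P k * of_nat ((k choose j) * fact j)) (k - j))"
    by (subst (1) poly_as_sum_of_monoms[symmetric]) (simp add: higher_pderiv_sum higher_pderiv_monom_binomial)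
  then show ?thesis
    by (simp add: poly_sum poly_monom)
qed

lemma higher_pderiv_eq_0: "degree P < j \<Longrightarrow> (pderiv ^^ j) P = 0"
  by (intro poly_eqI) (simp add: coeff_higher_pderiv coeff_eq_0)

lemma sum_atMost_vanishing_eq:
  fixes m d :: nat
  assumes "\<And>j. m < j \<Longrightarrow> g j = 0" "\<And>j. d < j \<Longrightarrow> g j = 0"
  shows "(\<Sum>j\<le>m. g j) = (\<Sum>j\<le>d. g j)"
proof -
  have "(\<Sum>j\<le>m. g j) = (\<Sum>j\<le>max m d. g j)"
    by (rule sum.mono_neutral_left) (auto intro: assms(1))
  moreover have "(\<Sum>j\<le>d. g j) = (\<Sum>j\<le>max m d. g j)"
    by (rule sum.mono_neutral_left) (auto intro: assms(2))
  ultimately show ?thesis by simp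
qed

lemma rho_T_eq_sum_higher_pderiv:
  assumes "\<bar>a\<bar> < 1"
  shows "rho_T \<epsilon> \<rho> x a = (\<Sum>j\<le>degree \<rho>. of_real ((- 2 * sqrt \<epsilon>) ^ j * ln_ratio_deriv j a / fact j)
           * poly ((pderiv ^^ j) \<rho>) (of_real (x\<^sup>2)))"
proof -
  define d where "d = degree \<rho>"
  define f where "f k j = coeff \<rho> k * (of_nat (k choose j) * of_real (x\<^sup>2) ^ (k - j)
      * of_real (- 2 * sqrt \<epsilon>) ^ j * of_real (ln_ratio_deriv j a))" for k j
  have "rho_T \<epsilon> \<rho> x a = (\<Sum>k\<le>d. \<Sum>j\<le>k. f k j)"
    unfolding rho_T_def Tcal_funpow_logfun[OF assms] f_def d_def by (simp add: sum_distrib_left)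
  also have "\<dots> = (\<Sum>k\<le>d. \<Sum>j\<le>d. f k j)"
    by (intro sum.cong refl sum_atMost_vanishing_eq) (auto simp: f_def binomial_eq_0)
  also have "\<dots> = (\<Sum>j\<le>d. \<Sum>k\<le>d. f k j)"
    by (rule sum.swap)
  also have "\<dots> = (\<Sum>j\<le>d. of_real ((- 2 * sqrt \<epsilon>) ^ j * ln_ratio_deriv j a / fact j)
      * poly ((pderiv ^^ j) \<rho>) (of_real (x\<^sup>2)))"
    unfolding poly_higher_pderiv d_def sum_distrib_left
    by (intro sum.cong refl) (simp add: f_def field_simps)
  finally show ?thesis
    by (simp add: d_def)
qed

lemma pderiv_t_poly: "pderiv (t_poly c Q) = t_poly c (pderiv Q)"
  by (simp add: t_poly_def gauss_deriv_poly_def pderiv_minus pderiv_smult pderiv_diff)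

lemma higher_pderiv_t_poly: "(pderiv ^^ j) (t_poly c Q) = t_poly c ((pderiv ^^ j) Q)"
  by (induction j) (simp_all add: pderiv_t_poly)

lemma poly_funpow_t_poly:
  assumes "s \<noteq> 0"
  shows "poly ((t_poly c ^^ k) P) y = (\<i> / of_real s) ^ k * (\<Sum>j\<le>k. of_nat (k choose j)
           * of_real (2 * c * s) ^ (k - j) * of_real (- 2 * s) ^ j * poly ((pderiv ^^ j) P) y)"
proof -
  define A :: complex where "A = of_real (2 * c * s)"
  define B :: complex where "B = of_real (- 2 * s)"
  have t_poly: "poly (t_poly c Q) y = \<i> / of_real s * (A * poly Q y + B * poly (pderiv Q) y)" for Q
    using assms by (simp add: t_poly_def gauss_deriv_poly_def A_def B_def field_simps)
  have "poly ((t_poly c ^^ k) P) y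
      = (\<i> / of_real s) ^ k * (\<Sum>j\<le>k. of_nat (k choose j) * A ^ (k - j) * B ^ j * poly ((pderiv ^^ j) P) y)"
  proof (induction k arbitrary: P)
    case (Suc k)
    define u where "u j = poly ((pderiv ^^ j) P) y" for j
    have "poly ((t_poly c ^^ Suc k) P) y = poly ((t_poly c ^^ k) (t_poly c P)) y"
      by (simp only: funpow_Suc_right o_def)
    also have "\<dots> = (\<i> / of_real s) ^ k * (\<Sum>j\<le>k. of_nat (k choose j) * A ^ (k - j) * B ^ j
        * (\<i> / of_real s * (A * u j + B * u (Suc j))))"
      unfolding Suc.IH higher_pderiv_t_poly t_poly by (simp add: u_def)
    also have "\<dots> = (\<i> / of_real s) ^ Suc k * (A * (\<Sum>j\<le>k. of_nat (k choose j) * A ^ (k - j) * B ^ j * u j)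
        + B * (\<Sum>j\<le>k. of_nat (k choose j) * A ^ (k - j) * B ^ j * u (Suc j)))"
      by (simp add: sum_distrib_left sum.distrib algebra_simps)
    also have "\<dots> = (\<i> / of_real s) ^ Suc k
        * (\<Sum>j\<le>Suc k. of_nat (Suc k choose j) * A ^ (Suc k - j) * B ^ j * u j)"
      by (simp only: binomial_sum_Suc)
    finally show ?case
      by (simp add: u_def)
  qed simp
  then show ?thesis
    by (simp add: A_def B_def)
qed

section \<open>The arctangent series\<close>

lemma arctan_partial_sum_t_poly:
  assumes "0 < s"
  shows "(\<Sum>n\<le>N. of_real ((-1) ^ n / real (2 * n + 1) * s ^ (2 * n + 1))
             * poly ((t_poly (\<alpha> / (2 * s)) ^^ (2 * n + 1)) \<rho>) y)
       = (\<Sum>j\<le>degree \<rho>. \<i> * of_real ((- 2 * s) ^ j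
             * (\<Sum>n\<le>N. real (2 * n + 1 choose j) / real (2 * n + 1) * \<alpha> ^ (2 * n + 1 - j)))
             * poly ((pderiv ^^ j) \<rho>) y)"
proof -
  define u where "u j = poly ((pderiv ^^ j) \<rho>) y" for j
  define t where "t n j = \<i> * of_real ((- 2 * s) ^ j * (real (2 * n + 1 choose j) / real (2 * n + 1)
      * \<alpha> ^ (2 * n + 1 - j))) * u j" for n j
  have "of_real ((-1) ^ n / real (2 * n + 1) * s ^ (2 * n + 1)) * poly ((t_poly (\<alpha> / (2 * s)) ^^ (2 * n + 1)) \<rho>) y
      = (\<Sum>j\<le>degree \<rho>. t n j)" for n
  proof -
    \<comment> \<open>The signs of the arctangent series cancel those of the powers of \<i>.\<close>
    have "\<i> ^ (2 * n + 1) = \<i> * (-1) ^ n"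
      by (simp add: power_add power_mult)
    then have coeff: "of_real ((-1) ^ n / real (2 * n + 1) * s ^ (2 * n + 1)) * (\<i> / of_real s) ^ (2 * n + 1)
        = \<i> / of_real (real (2 * n + 1))"
      using assms by (simp add: power_divide field_simps flip: power_mult_distrib)
    have "2 * (\<alpha> / (2 * s)) * s = \<alpha>"
      using assms by simp
    then have "of_real ((-1) ^ n / real (2 * n + 1) * s ^ (2 * n + 1)) * poly ((t_poly (\<alpha> / (2 * s)) ^^ (2 * n + 1)) \<rho>) y
        = \<i> / of_real (real (2 * n + 1)) * (\<Sum>j\<le>2 * n + 1. of_nat (2 * n + 1 choose j)
            * of_real \<alpha> ^ (2 * n + 1 - j) * of_real (- 2 * s) ^ j * u j)"
      unfolding poly_funpow_t_poly[OF less_imp_neq[OF assms, symmetric]] mult.assoc[symmetric] coeff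
      by (simp add: u_def)
    also have "\<dots> = (\<Sum>j\<le>2 * n + 1. t n j)"
      unfolding sum_distrib_left by (intro sum.cong refl) (simp add: t_def field_simps)
    also have "\<dots> = (\<Sum>j\<le>degree \<rho>. t n j)"
      by (rule sum_atMost_vanishing_eq) (simp_all add: t_def u_def binomial_eq_0 higher_pderiv_eq_0)
    finally show ?thesis .
  qed
  then have "(\<Sum>n\<le>N. of_real ((-1) ^ n / real (2 * n + 1) * s ^ (2 * n + 1))
      * poly ((t_poly (\<alpha> / (2 * s)) ^^ (2 * n + 1)) \<rho>) y) = (\<Sum>n\<le>N. \<Sum>j\<le>degree \<rho>. t n j)"
    by (rule sum.cong[OF refl])
  also have "\<dots> = (\<Sum>j\<le>degree \<rho>. \<Sum>n\<le>N. t n j)"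
    by (rule sum.swap)
  finally show ?thesis
    by (simp only: t_def u_def sum_distrib_left sum_distrib_right of_real_sum)
qed

lemma arctan_partial_sum_plus_rho_T:
  assumes "0 < \<epsilon>" "\<bar>\<alpha>\<bar> < 1"
  shows "(\<Sum>n\<le>N. of_real ((-1) ^ n / real (2 * n + 1) * sqrt \<epsilon> ^ (2 * n + 1))
             * poly ((t_poly (\<alpha> / (2 * sqrt \<epsilon>)) ^^ (2 * n + 1)) \<rho>) (of_real (x\<^sup>2)))
           + of_real (sqrt \<epsilon>) * (- (\<i> / of_real (2 * sqrt \<epsilon>)) * rho_T \<epsilon> \<rho> x \<alpha>)
       = (\<Sum>j\<le>degree \<rho>. \<i> * of_real ((- 2 * sqrt \<epsilon>) ^ j
             * ((\<Sum>n\<le>N. real (2 * n + 1 choose j) / real (2 * n + 1) * \<alpha> ^ (2 * n + 1 - j))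
                - ln_ratio_deriv j \<alpha> / (2 * fact j)))
             * poly ((pderiv ^^ j) \<rho>) (of_real (x\<^sup>2)))"
proof -
  define s where "s = sqrt \<epsilon>"
  have "0 < s"
    using assms(1) by (simp add: s_def)
  define u where "u j = poly ((pderiv ^^ j) \<rho>) (of_real (x\<^sup>2))" for j
  have "of_real s * (- (\<i> / of_real (2 * s)) * rho_T \<epsilon> \<rho> x \<alpha>)
      = - (\<Sum>j\<le>degree \<rho>. \<i> * of_real ((- 2 * s) ^ j * (ln_ratio_deriv j \<alpha> / (2 * fact j))) * u j)"
    unfolding rho_T_eq_sum_higher_pderiv[OF assms(2)] s_def[symmetric] u_def
    using \<open>0 < s\<close> by (simp add: sum_distrib_left field_simps sum_negf)
  then show ?thesis
    unfolding s_def[symmetric] arctan_partial_sum_t_poly[OF \<open>0 < s\<close>]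
    by (simp add: u_def sum_subtractf[symmetric] algebra_simps)
qed

lemma arctan_graph_sq_poly_times:
  assumes "0 < \<epsilon>" "\<bar>\<alpha>\<bar> < 1"
    and R: "\<And>P. R (sq_poly_times w P) (sq_poly_times w (t_poly (\<alpha> / (2 * sqrt \<epsilon>)) P))"
    and decay: "\<And>P. gaussian_decay (sq_poly_times w P)"
  shows "arctan_graph R \<epsilon> (sq_poly_times w \<rho>) (\<lambda>x. - (\<i> / of_real (2 * sqrt \<epsilon>)) * rho_T \<epsilon> \<rho> x \<alpha> * w x)"
proof -
  define b where "b N j = (\<Sum>n\<le>N. real (2 * n + 1 choose j) / real (2 * n + 1) * \<alpha> ^ (2 * n + 1 - j))" for N j
  define a where "a N j = \<i> * of_real ((- 2 * sqrt \<epsilon>) ^ j * (b N j - ln_ratio_deriv j \<alpha> / (2 * fact j)))" for N j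
  define T where "T n = sq_poly_times w ((t_poly (\<alpha> / (2 * sqrt \<epsilon>)) ^^ (2 * n + 1)) \<rho>)" for n
  have remainder: "(\<Sum>n\<le>N. of_real ((-1) ^ n / real (2 * n + 1) * sqrt \<epsilon> ^ (2 * n + 1)) * T n x)
      + of_real (sqrt \<epsilon>) * (- (\<i> / of_real (2 * sqrt \<epsilon>)) * rho_T \<epsilon> \<rho> x \<alpha> * w x)
      = (\<Sum>j\<le>degree \<rho>. a N j * sq_poly_times w ((pderiv ^^ j) \<rho>) x)" for N x
  proof -
    have "(\<Sum>n\<le>N. of_real ((-1) ^ n / real (2 * n + 1) * sqrt \<epsilon> ^ (2 * n + 1)) * T n x)
        + of_real (sqrt \<epsilon>) * (- (\<i> / of_real (2 * sqrt \<epsilon>)) * rho_T \<epsilon> \<rho> x \<alpha> * w x)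
      = ((\<Sum>n\<le>N. of_real ((-1) ^ n / real (2 * n + 1) * sqrt \<epsilon> ^ (2 * n + 1))
             * poly ((t_poly (\<alpha> / (2 * sqrt \<epsilon>)) ^^ (2 * n + 1)) \<rho>) (of_real (x\<^sup>2)))
           + of_real (sqrt \<epsilon>) * (- (\<i> / of_real (2 * sqrt \<epsilon>)) * rho_T \<epsilon> \<rho> x \<alpha>)) * w x"
      by (simp only: T_def sq_poly_times_def sum_distrib_right distrib_right mult.assoc)
    also have "\<dots> = (\<Sum>j\<le>degree \<rho>. a N j * sq_poly_times w ((pderiv ^^ j) \<rho>) x)"
      unfolding arctan_partial_sum_plus_rho_T[OF assms(1,2)]
      by (simp add: sum_distrib_left sum_distrib_right a_def b_def sq_poly_times_def mult_ac)
    finally show ?thesis .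
  qed
  have "(\<lambda>N. b N j) \<longlonglongrightarrow> ln_ratio_deriv j \<alpha> / (2 * fact j)" for j
    using odd_binomial_series_sums[OF assms(2), of j] unfolding sums_def_le b_def .
  then have a: "(\<lambda>N. a N j) \<longlonglongrightarrow> 0" for j
    unfolding a_def by (auto intro!: tendsto_eq_intros simp: LIM_zero_iff)
  have g: "- (\<i> / of_real (2 * sqrt \<epsilon>)) * rho_T \<epsilon> \<rho> x \<alpha> * w x
      = (\<Sum>j\<le>degree \<rho>. (- (\<i> / of_real (2 * sqrt \<epsilon>))
          * of_real ((- 2 * sqrt \<epsilon>) ^ j * ln_ratio_deriv j \<alpha> / fact j)) * sq_poly_times w ((pderiv ^^ j) \<rho>) x)" for x
    unfolding rho_T_eq_sum_higher_pderiv[OF assms(2)] sq_poly_times_def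
    by (simp add: sum_distrib_left sum_distrib_right mult_ac)
  show ?thesis
    unfolding arctan_graph_def
  proof (intro conjI exI[of _ T] allI)
    show "L2 (sq_poly_times w \<rho>)"
      by (rule gaussian_decay_L2[OF decay])
    show "L2 (\<lambda>x. - (\<i> / of_real (2 * sqrt \<epsilon>)) * rho_T \<epsilon> \<rho> x \<alpha> * w x)"
      unfolding g by (intro gaussian_decay_L2 gaussian_decay_sum gaussian_decay_mult_left decay)
    show "pow_graph R (2 * n + 1) (sq_poly_times w \<rho>) (T n)" for n
      unfolding T_def by (rule pow_graph_funpow[where \<phi>="sq_poly_times w"]) (use gaussian_decay_L2[OF decay] R in auto)
    show "(\<lambda>N. l2norm (\<lambda>x. (\<Sum>n\<le>N. of_real ((-1) ^ n / real (2 * n + 1) * sqrt \<epsilon> ^ (2 * n + 1)) * T n x)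
        + of_real (sqrt \<epsilon>) * (- (\<i> / of_real (2 * sqrt \<epsilon>)) * rho_T \<epsilon> \<rho> x \<alpha> * w x))) \<longlonglongrightarrow> 0"
      unfolding remainder
      by (rule l2norm_finite_sum_tendsto_0[where u="\<lambda>j. sq_poly_times w ((pderiv ^^ j) \<rho>)", OF finite_atMost])
        (simp_all add: gaussian_decay_L2 decay a)
  qed
qed

theorem lemma3p8:
  fixes \<epsilon> \<alpha> :: real and \<rho> :: "complex poly"
  assumes "0 < \<epsilon>" "\<epsilon> \<le> 1" "0 < \<alpha>" "\<alpha> < 1"
  defines "\<xi> \<equiv> (\<lambda>x::real. complex_of_real (exp (- \<alpha> * x^2 / (2 * sqrt \<epsilon>))))"
  shows "S_graph \<epsilon> (\<lambda>x. poly \<rho> (of_real (x^2)) * \<xi> x)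
           (\<lambda>x. - (\<i> / of_real (2 * sqrt \<epsilon>)) * rho_T \<epsilon> \<rho> x \<alpha> * \<xi> x)
       \<and> S_adj_graph \<epsilon> (\<lambda>x. poly \<rho> (of_real (x^2)) * of_real x * \<xi> x)
           (\<lambda>x. - (\<i> / of_real (2 * sqrt \<epsilon>)) * rho_T \<epsilon> \<rho> x \<alpha> * of_real x * \<xi> x)"
proof -
  define c where "c = \<alpha> / (2 * sqrt \<epsilon>)"
  have "0 < c" "\<bar>\<alpha>\<bar> < 1"
    using assms by (simp_all add: c_def)
  have \<xi>: "\<xi> = gauss c"
    by (simp add: fun_eq_iff \<xi>_def gauss_def c_def)
  note arctan = arctan_graph_sq_poly_times[OF \<open>0 < \<epsilon>\<close> \<open>\<bar>\<alpha>\<bar> < 1\<close>, folded c_def]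
  have "even_fun (sq_poly_times (gauss c) \<rho>)"
    unfolding even_fun_def using gaussian_decay_L2[OF gaussian_decay_sq_poly_gauss[OF \<open>0 < c\<close>]]
    by (simp add: sq_poly_times_def gauss_def)
  moreover have "odd_fun (sq_poly_times (\<lambda>x. of_real x * gauss c x) \<rho>)"
    unfolding odd_fun_def using gaussian_decay_L2[OF gaussian_decay_sq_poly_xgauss[OF \<open>0 < c\<close>]]
    by (simp add: sq_poly_times_def gauss_def)
  moreover note arctan[where R = t_graph and w = "gauss c",
      OF t_graph_sq_poly_gauss[OF \<open>0 < c\<close>] gaussian_decay_sq_poly_gauss[OF \<open>0 < c\<close>]]
    arctan[where R = t_adj_graph and w = "\<lambda>x. of_real x * gauss c x",
      OF t_adj_graph_sq_poly_xgauss[OF \<open>0 < c\<close>] gaussian_decay_sq_poly_xgauss[OF \<open>0 < c\<close>]]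
  moreover have "(\<lambda>x. poly \<rho> (of_real (x^2)) * gauss c x) = sq_poly_times (gauss c) \<rho>"
    and "(\<lambda>x. poly \<rho> (of_real (x^2)) * of_real x * gauss c x) = sq_poly_times (\<lambda>x. of_real x * gauss c x) \<rho>"
    and "(\<lambda>x. - (\<i> / of_real (2 * sqrt \<epsilon>)) * rho_T \<epsilon> \<rho> x \<alpha> * of_real x * gauss c x)
      = (\<lambda>x. - (\<i> / of_real (2 * sqrt \<epsilon>)) * rho_T \<epsilon> \<rho> x \<alpha> * (of_real x * gauss c x))"
    by (simp_all add: fun_eq_iff sq_poly_times_def mult.assoc)
  ultimately show ?thesis
    unfolding S_graph_def S_adj_graph_def \<xi> by simp
qed

end
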